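(* Let $p$ be a probability measure on $\mathbb{R}^d$ with $M:=\int_{\mathbb{R}^d}\|x\|^2\,p(dx)<\infty$, and let $(p_t)_{t\ge0}$ be the laws of the Ornstein--Uhlenbeck process $dX_t=-X_t\,dt+\sqrt2\,dB_t$, $X_0\sim p$. Then for $0<\tau<\frac{d}{M^2}$, $W_2(p,p_\tau)\le\sqrt{3\tau d}$.
   Context: $W_2$ denotes the 2-Wasserstein distance. *)

theory Defs
  imports "HOL-Probability.Probability"
begin

definition std_gaussian :: "'a::euclidean_space measure" where
  "std_gaussian = density lborel
     (\<lambda>x. ennreal ((2 * pi) powr (- real DIM('a) / 2) * exp (- (norm x)\<^sup>2 / 2)))"

text \<open>Law at time t of the Ornstein-Uhlenbeck process dX = -X dt + sqrt 2 dB, X_0 ~ p: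
  X_t = e^{-t} X_0 + sqrt(1 - e^{-2t}) Z with Z ~ N(0,I) independent of X_0.\<close>
definition OU_law :: "'a::euclidean_space measure \<Rightarrow> real \<Rightarrow> 'a measure" where
  "OU_law p t = distr (p \<Otimes>\<^sub>M std_gaussian) borel
     (\<lambda>(x, z). exp (- t) *\<^sub>R x + sqrt (1 - exp (- 2 * t)) *\<^sub>R z)"

definition couplings :: "'a::euclidean_space measure \<Rightarrow> 'a measure \<Rightarrow> ('a \<times> 'a) measure set" where
  "couplings p q = {\<pi>. prob_space \<pi> \<and> sets \<pi> = sets (borel \<Otimes>\<^sub>M borel)
      \<and> distr \<pi> borel fst = p \<and> distr \<pi> borel snd = q}"

definition ennreal_sqrt :: "ennreal \<Rightarrow> ennreal" where
  "ennreal_sqrt c = (if c = \<infinity> then \<infinity> else ennreal (sqrt (enn2real c)))"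

definition W2 :: "'a::euclidean_space measure \<Rightarrow> 'a measure \<Rightarrow> ennreal" where
  "W2 p q = ennreal_sqrt (INF \<pi> \<in> couplings p q. \<integral>\<^sup>+ xy. ennreal ((norm (fst xy - snd xy))\<^sup>2) \<partial>\<pi>)"

end

theory Submission
  imports Defs
begin

text \<open>Use the synchronous coupling of X_0 with X_\<tau> = e^{-\<tau>} X_0 + \<sigma> Z, where
  \<sigma>^2 = 1 - e^{-2\<tau>}. Its displacement (1 - e^{-\<tau>}) X_0 - \<sigma> Z has second moment
  (1 - e^{-\<tau>})^2 M + (1 - e^{-2\<tau>}) d, because Z is centred and independent of X_0.
  The second term is at most 2\<tau>d; the first is at most \<tau>d, since 1 - e^{-\<tau>} \<le> min \<tau> 1
  and \<tau>M^2 < d.\<close>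

lemma std_gaussian_density_eq_prod:
  fixes x :: "'a::euclidean_space"
  shows "(2 * pi) powr (- real DIM('a) / 2) * exp (- (norm x)\<^sup>2 / 2)
       = (\<Prod>b\<in>Basis. std_normal_density (x \<bullet> b))"
proof -
  have "(2 * pi) powr (- real DIM('a) / 2) = ((2 * pi) powr (- 1 / 2)) ^ DIM('a)"
    by (simp add: powr_realpow[symmetric] powr_powr)
  also have "\<dots> = 1 / sqrt (2 * pi) ^ DIM('a)"
    by (simp add: powr_minus_divide powr_half_sqrt power_one_over)
  finally have normalisation: "(2 * pi) powr (- real DIM('a) / 2) = 1 / sqrt (2 * pi) ^ DIM('a)" .
  have "(norm x)\<^sup>2 = (\<Sum>b\<in>Basis. (x \<bullet> b)\<^sup>2)"
    by (simp only: power2_norm_eq_inner euclidean_inner[of x x]) (simp add: power2_eq_square)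
  then have "exp (- (norm x)\<^sup>2 / 2) = (\<Prod>b\<in>Basis. exp (- (x \<bullet> b)\<^sup>2 / 2))"
    by (simp add: exp_sum[symmetric] sum_negf sum_divide_distrib)
  then show ?thesis
    unfolding normalisation by (simp add: std_normal_density_def prod_dividef)
qed

lemma sets_std_gaussian [simp, measurable_cong]:
  "sets (std_gaussian :: 'a::euclidean_space measure) = sets borel"
  by (simp add: std_gaussian_def)

lemma nn_integral_std_gaussian:
  fixes g :: "'a::euclidean_space \<Rightarrow> ennreal"
  assumes [measurable]: "g \<in> borel_measurable borel"
  shows "(\<integral>\<^sup>+ z. g z \<partial>std_gaussian)
       = (\<integral>\<^sup>+ z. (\<Prod>b\<in>Basis. ennreal (std_normal_density (z \<bullet> b))) * g z \<partial>lborel)"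
  unfolding std_gaussian_def std_gaussian_density_eq_prod
  by (subst nn_integral_density) (auto simp: normal_density_nonneg simp flip: prod_ennreal)

lemma nn_integral_std_normal_square:
  fixes c s :: real
  shows "(\<integral>\<^sup>+ t. ennreal (std_normal_density t * (c - s * t)\<^sup>2) \<partial>lborel) = ennreal (c\<^sup>2 + s\<^sup>2)"
proof -
  have "has_bochner_integral lborel
     (\<lambda>t. c\<^sup>2 * (std_normal_density t * t ^ (2 * 0))
          - (2 * c * s) * (std_normal_density t * t ^ (2 * 0 + 1))
          + s\<^sup>2 * (std_normal_density t * t ^ (2 * 1)))
     (c\<^sup>2 * (fact (2 * 0) / (2 ^ 0 * fact 0)) - (2 * c * s) * 0
          + s\<^sup>2 * (fact (2 * 1) / (2 ^ 1 * fact 1)))"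
    by (intro has_bochner_integral_add has_bochner_integral_diff has_bochner_integral_mult_right
        std_normal_moment_even std_normal_moment_odd)
  then have "has_bochner_integral lborel (\<lambda>t. std_normal_density t * (c - s * t)\<^sup>2) (c\<^sup>2 + s\<^sup>2)"
    by (simp add: power2_eq_square algebra_simps)
  then show ?thesis
    by (subst nn_integral_eq_integral) (auto simp: has_bochner_integral_iff)
qed

lemma nn_integral_std_normal:
  "(\<integral>\<^sup>+ t. ennreal (std_normal_density t) \<partial>lborel) = 1"
  using nn_integral_std_normal_square[of 1 0] by simp

lemma prob_space_std_gaussian: "prob_space (std_gaussian :: 'a::euclidean_space measure)"
proof
  have "emeasure (std_gaussian :: 'a measure) (space std_gaussian) = (\<integral>\<^sup>+ z. 1 \<partial>(std_gaussian :: 'a measure))"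
    by simp
  also have "\<dots> = (\<integral>\<^sup>+ z. (\<Prod>b\<in>(Basis::'a set). ennreal (std_normal_density (z \<bullet> b))) \<partial>lborel)"
    by (subst nn_integral_std_gaussian) auto
  also have "\<dots> = (\<Prod>b\<in>(Basis::'a set). \<integral>\<^sup>+ t. ennreal (std_normal_density t) \<partial>lborel)"
    by (rule nn_integral_lborel_prod) auto
  finally show "emeasure (std_gaussian :: 'a measure) (space std_gaussian) = 1"
    by (simp add: nn_integral_std_normal)
qed

lemma nn_integral_std_gaussian_coordinate_square:
  fixes v :: "'a::euclidean_space" and s :: real
  assumes b0: "b0 \<in> Basis"
  shows "(\<integral>\<^sup>+ z. ennreal ((v \<bullet> b0 - s * (z \<bullet> b0))\<^sup>2) \<partial>std_gaussian) = ennreal ((v \<bullet> b0)\<^sup>2 + s\<^sup>2)"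
proof -
  define g where "g b t = ennreal (std_normal_density t)
      * (if b = b0 then ennreal ((v \<bullet> b0 - s * t)\<^sup>2) else 1)" for b t
  have "(\<integral>\<^sup>+ z. ennreal ((v \<bullet> b0 - s * (z \<bullet> b0))\<^sup>2) \<partial>std_gaussian)
      = (\<integral>\<^sup>+ z. (\<Prod>b\<in>Basis. g b (z \<bullet> b)) \<partial>lborel)"
    by (subst nn_integral_std_gaussian) (auto simp: g_def prod.distrib prod.delta b0)
  also have "\<dots> = (\<Prod>b\<in>Basis. \<integral>\<^sup>+ t. g b t \<partial>lborel)"
    by (rule nn_integral_lborel_prod) (auto simp: g_def)
  also have "\<dots> = (\<Prod>b\<in>Basis. if b = b0 then ennreal ((v \<bullet> b0)\<^sup>2 + s\<^sup>2) else 1)"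
    using nn_integral_std_normal_square[of "v \<bullet> b0" s]
    by (intro prod.cong) (simp_all add: g_def nn_integral_std_normal flip: ennreal_mult')
  finally show ?thesis
    by (simp add: prod.delta b0)
qed

lemma nn_integral_std_gaussian_norm_square:
  fixes v :: "'a::euclidean_space" and s :: real
  shows "(\<integral>\<^sup>+ z. ennreal ((norm (v - s *\<^sub>R z))\<^sup>2) \<partial>std_gaussian)
       = ennreal ((norm v)\<^sup>2 + s\<^sup>2 * DIM('a))"
proof -
  have norm_square: "(norm w)\<^sup>2 = (\<Sum>b\<in>Basis. (w \<bullet> b)\<^sup>2)" for w :: 'a
    by (simp only: power2_norm_eq_inner euclidean_inner[of w w]) (simp add: power2_eq_square)
  have "(\<integral>\<^sup>+ z. ennreal ((norm (v - s *\<^sub>R z))\<^sup>2) \<partial>std_gaussian)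
      = (\<integral>\<^sup>+ z. (\<Sum>b\<in>Basis. ennreal ((v \<bullet> b - s * (z \<bullet> b))\<^sup>2)) \<partial>std_gaussian)"
    by (intro nn_integral_cong) (simp add: norm_square[of "v - s *\<^sub>R _"] inner_diff_left)
  also have "\<dots> = (\<Sum>b\<in>Basis. \<integral>\<^sup>+ z. ennreal ((v \<bullet> b - s * (z \<bullet> b))\<^sup>2) \<partial>std_gaussian)"
    by (rule nn_integral_sum) auto
  also have "\<dots> = (\<Sum>b\<in>Basis. ennreal ((v \<bullet> b)\<^sup>2 + s\<^sup>2))"
    by (rule sum.cong) (auto simp: nn_integral_std_gaussian_coordinate_square)
  also have "\<dots> = ennreal (\<Sum>b\<in>Basis. (v \<bullet> b)\<^sup>2 + s\<^sup>2)"
    by (rule sum_ennreal) simp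
  also have "(\<Sum>b\<in>Basis. (v \<bullet> b)\<^sup>2 + s\<^sup>2) = (norm v)\<^sup>2 + s\<^sup>2 * DIM('a)"
    by (simp add: norm_square[of v] sum.distrib)
  finally show ?thesis .
qed

definition OU_coupling :: "'a::euclidean_space measure \<Rightarrow> real \<Rightarrow> ('a \<times> 'a) measure" where
  "OU_coupling p t = distr (p \<Otimes>\<^sub>M std_gaussian) (borel \<Otimes>\<^sub>M borel)
     (\<lambda>(x, z). (x, exp (- t) *\<^sub>R x + sqrt (1 - exp (- 2 * t)) *\<^sub>R z))"

lemma OU_coupling_in_couplings:
  assumes "prob_space p" and sets_p [measurable_cong]: "sets p = sets borel"
  shows "OU_coupling p t \<in> couplings p (OU_law p t)"
proof -
  interpret G: prob_space "std_gaussian :: 'a measure"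
    by (rule prob_space_std_gaussian)
  have "prob_space (p \<Otimes>\<^sub>M (std_gaussian :: 'a measure))"
    by (intro prob_space_pair assms(1) G.prob_space_axioms)
  moreover have "distr (p \<Otimes>\<^sub>M (std_gaussian :: 'a measure)) borel fst = p"
    using G.distr_pair_fst[of p] by (simp add: sets_p cong: distr_cong)
  ultimately show ?thesis
    unfolding couplings_def OU_coupling_def OU_law_def
    by (auto intro!: prob_space.prob_space_distr distr_cong simp: distr_distr comp_def split_beta)
qed

lemma OU_coupling_cost:
  fixes p :: "'a::euclidean_space measure"
  assumes "prob_space p" and [measurable_cong]: "sets p = sets borel"
    and "integrable p (\<lambda>x. (norm x)\<^sup>2)" and "0 \<le> t"
  shows "(\<integral>\<^sup>+ xy. ennreal ((norm (fst xy - snd xy))\<^sup>2) \<partial>OU_coupling p t)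
       = ennreal ((1 - exp (- t))\<^sup>2 * (\<integral>x. (norm x)\<^sup>2 \<partial>p) + (1 - exp (- 2 * t)) * DIM('a))"
proof -
  interpret p: prob_space p by fact
  interpret G: prob_space "std_gaussian :: 'a measure"
    by (rule prob_space_std_gaussian)
  define a where "a = 1 - exp (- t)"
  define s where "s = sqrt (1 - exp (- 2 * t))"
  have s_square: "s\<^sup>2 = 1 - exp (- 2 * t)"
    using \<open>0 \<le> t\<close> by (simp add: s_def)
  have "(\<integral>\<^sup>+ xy. ennreal ((norm (fst xy - snd xy))\<^sup>2) \<partial>OU_coupling p t)
      = (\<integral>\<^sup>+ x. \<integral>\<^sup>+ z. ennreal ((norm (a *\<^sub>R x - s *\<^sub>R z))\<^sup>2) \<partial>std_gaussian \<partial>p)"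
    unfolding OU_coupling_def
    by (simp add: nn_integral_distr G.nn_integral_fst[symmetric] split_beta a_def s_def
        algebra_simps)
  also have "\<dots> = (\<integral>\<^sup>+ x. ennreal (a\<^sup>2 * (norm x)\<^sup>2 + s\<^sup>2 * DIM('a)) \<partial>p)"
    by (simp add: nn_integral_std_gaussian_norm_square power_mult_distrib)
  also have "\<dots> = ennreal (a\<^sup>2 * (\<integral>x. (norm x)\<^sup>2 \<partial>p) + s\<^sup>2 * DIM('a))"
    using assms(3) by (subst nn_integral_eq_integral) (auto simp: p.prob_space)
  finally show ?thesis
    by (simp only: a_def s_square)
qed

lemma W2_le_of_coupling:
  assumes "\<pi> \<in> couplings p q"
    and "(\<integral>\<^sup>+ xy. ennreal ((norm (fst xy - snd xy))\<^sup>2) \<partial>\<pi>) \<le> ennreal c" and "0 \<le> c"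
  shows "W2 p q \<le> ennreal (sqrt c)"
proof -
  let ?I = "INF \<pi> \<in> couplings p q. \<integral>\<^sup>+ xy. ennreal ((norm (fst xy - snd xy))\<^sup>2) \<partial>\<pi>"
  have I_le: "?I \<le> ennreal c"
    using assms(1,2) by (rule INF_lower2)
  then have "?I \<noteq> \<infinity>"
    unfolding infinity_ennreal_def by (rule neq_top_trans[OF ennreal_neq_top])
  have "enn2real ?I \<le> c"
    using enn2real_mono[OF I_le] \<open>0 \<le> c\<close> by simp
  have "W2 p q = ennreal (sqrt (enn2real ?I))"
    unfolding W2_def ennreal_sqrt_def by (rule if_not_P) fact
  also have "\<dots> \<le> ennreal (sqrt c)"
    by (intro ennreal_leI real_sqrt_le_mono) fact
  finally show ?thesis .
qed

lemma OU_coupling_cost_le: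
  fixes M t d :: real
  assumes "0 < t" and "0 \<le> M" and "1 \<le> d" and "t * M\<^sup>2 < d"
  shows "(1 - exp (- t))\<^sup>2 * M + (1 - exp (- 2 * t)) * d \<le> 3 * t * d"
proof -
  define u where "u = 1 - exp (- t)"
  have u: "0 \<le> u" "u \<le> t" "u \<le> 1"
    using \<open>0 < t\<close> exp_ge_add_one_self[of "- t"] by (auto simp: u_def)
  have "u * M \<le> d"
  proof (cases "M \<le> 1")
    case True
    then show ?thesis
      using u \<open>0 \<le> M\<close> \<open>1 \<le> d\<close> mult_mono[of u 1 M 1] by simp
  next
    case False
    then have "u * M \<le> t * M\<^sup>2"
      using u mult_mono[of u t M "M\<^sup>2"] by (simp add: power2_eq_square)
    then show ?thesis
      using \<open>t * M\<^sup>2 < d\<close> by simp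
  qed
  then have "u\<^sup>2 * M \<le> t * d"
    using u \<open>0 \<le> M\<close> mult_mono[of u t "u * M" d] by (simp add: power2_eq_square mult.assoc)
  moreover have "(1 - exp (- 2 * t)) * d \<le> 2 * t * d"
    using exp_ge_add_one_self[of "- 2 * t"] \<open>1 \<le> d\<close> by (intro mult_right_mono) auto
  ultimately show ?thesis
    by (simp add: u_def)
qed

theorem lemma1:
  fixes p :: "(real ^ 'd) measure" and M \<tau> :: real
  assumes "prob_space p"
    and "sets p = sets borel"
    and "integrable p (\<lambda>x. (norm x)\<^sup>2)"
    and "M = (\<integral>x. (norm x)\<^sup>2 \<partial>p)"
    and "0 < \<tau>"
    and "\<tau> * M\<^sup>2 < real CARD('d)"
  shows "W2 p (OU_law p \<tau>) \<le> ennreal (sqrt (3 * \<tau> * real CARD('d)))"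
proof (rule W2_le_of_coupling)
  show "OU_coupling p \<tau> \<in> couplings p (OU_law p \<tau>)"
    using assms(1,2) by (rule OU_coupling_in_couplings)
  have "0 \<le> M"
    by (simp add: assms(4))
  then have "(1 - exp (- \<tau>))\<^sup>2 * M + (1 - exp (- 2 * \<tau>)) * CARD('d) \<le> 3 * \<tau> * CARD('d)"
    using assms(5,6) by (intro OU_coupling_cost_le) auto
  then show "(\<integral>\<^sup>+ xy. ennreal ((norm (fst xy - snd xy))\<^sup>2) \<partial>OU_coupling p \<tau>)
      \<le> ennreal (3 * \<tau> * CARD('d))"
    using assms(5) by (simp add: OU_coupling_cost assms(1-3) flip: assms(4))
  show "0 \<le> 3 * \<tau> * real CARD('d)"
    using assms(5) by simp
qed

end
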